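(* Let $A\in\mathbb{C}^{m\times n}$ have rank $r$, $B\in\mathbb{C}^{m\times n}$ have rank $s$, and $E=B-A$. Then $$\|B^{\dagger}-A^{\dagger}\|_{F}^{2}\leq\min\big\{\gamma_{1}+\|B^{\dagger}EA^{\dagger}\|_{F}^{2},\ \gamma_{2}+\|A^{\dagger}EB^{\dagger}\|_{F}^{2}\big\},$$ where $$\gamma_{1}:=\|A^{\dagger}\|_{2}^{2}\Big(\|A^{\dagger}E\|_{F}^{2}-\frac{\|A^{\dagger}EB^{\dagger}\|_{F}^{2}}{\|B^{\dagger}\|_{2}^{2}}\Big)+\|B^{\dagger}\|_{2}^{2}\Big(\|EB^{\dagger}\|_{F}^{2}-\frac{\|A^{\dagger}EB^{\dagger}\|_{F}^{2}}{\|A^{\dagger}\|_{2}^{2}}\Big),$$ $$\gamma_{2}:=\|A^{\dagger}\|_{2}^{2}\Big(\|EA^{\dagger}\|_{F}^{2}-\frac{\|B^{\dagger}EA^{\dagger}\|_{F}^{2}}{\|B^{\dagger}\|_{2}^{2}}\Big)+\|B^{\dagger}\|_{2}^{2}\Big(\|B^{\dagger}E\|_{F}^{2}-\frac{\|B^{\dagger}EA^{\dagger}\|_{F}^{2}}{\|A^{\dagger}\|_{2}^{2}}\Big).$$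
   Context: $M^{\dagger}$ denotes the Moore–Penrose inverse of $M$, $\|\cdot\|_{2}$ the spectral norm and $\|\cdot\|_{F}$ the Frobenius norm. *)

theory Defs
  imports "HOL-Analysis.Analysis"
begin

definition conj_transpose :: "complex^'n^'m \<Rightarrow> complex^'m^'n" where
  "conj_transpose A = (\<chi> i j. cnj (A $ j $ i))"

definition mp_inverse :: "complex^'n^'m \<Rightarrow> complex^'m^'n" where
  "mp_inverse A = (THE X. A ** X ** A = A \<and> X ** A ** X = X \<and>
                         conj_transpose (A ** X) = A ** X \<and>
                         conj_transpose (X ** A) = X ** A)"

definition frob_norm :: "complex^'n^'m \<Rightarrow> real" where
  "frob_norm A = sqrt (\<Sum>i\<in>UNIV. \<Sum>j\<in>UNIV. (cmod (A $ i $ j))\<^sup>2)"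

definition spec_norm :: "complex^'n^'m \<Rightarrow> real" where
  "spec_norm A = onorm (\<lambda>x. A *v x)"

end

theory Submission
  imports Defs
begin

text \<open>
  With \<open>P = A A\<^sup>\<dagger>\<close> and \<open>Q = B\<^sup>\<dagger> B\<close> one has
  \<open>B\<^sup>\<dagger> - A\<^sup>\<dagger> = - B\<^sup>\<dagger> E A\<^sup>\<dagger> + B\<^sup>\<dagger> (I - P) - (I - Q) A\<^sup>\<dagger>\<close>, and the three terms are
  orthogonal in the Frobenius inner product: the first two lie in the range of the orthogonal
  projector \<open>Q\<close> and the third in its complement, while right multiplication by \<open>P\<close> fixes the
  first and annihilates the second. Since \<open>A\<^sup>H (I - P) = 0\<close>, the middle term equals \<open>B\<^sup>\<dagger> B\<^sup>\<dagger>\<^sup>H E\<^sup>H (I - P)\<close>, so its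
  norm is at most \<open>\<parallel>B\<^sup>\<dagger>\<parallel>\<^sub>2 \<parallel>(I - P) E B\<^sup>\<dagger>\<parallel>\<^sub>F\<close>, and splitting \<open>E B\<^sup>\<dagger>\<close> along \<open>P\<close> gives
  \<open>\<parallel>(I - P) E B\<^sup>\<dagger>\<parallel>\<^sub>F\<^sup>2 = \<parallel>E B\<^sup>\<dagger>\<parallel>\<^sub>F\<^sup>2 - \<parallel>P E B\<^sup>\<dagger>\<parallel>\<^sub>F\<^sup>2 \<le> \<parallel>E B\<^sup>\<dagger>\<parallel>\<^sub>F\<^sup>2 - \<parallel>A\<^sup>\<dagger> E B\<^sup>\<dagger>\<parallel>\<^sub>F\<^sup>2 / \<parallel>A\<^sup>\<dagger>\<parallel>\<^sub>2\<^sup>2\<close>.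
  The last term is the middle one for the conjugate transposes. This gives the bound with
  \<open>\<gamma>\<^sub>1\<close>; exchanging \<open>A\<close> and \<open>B\<close> gives the one with \<open>\<gamma>\<^sub>2\<close>.

  The Penrose equations for \<open>mp_inverse\<close> need the existence of a solution: it is assembled
  from a \<open>{1}\<close>-inverse of the Hermitian matrix \<open>A\<^sup>H A\<close>, which in turn comes from a linear
  dependence among its powers.
\<close>

section \<open>Matrix algebra and conjugate transpose\<close>

notation conj_transpose ("_\<^sup>H" [1000] 999)

lemma conj_transpose_nth [simp]: "A\<^sup>H $ i $ j = cnj (A $ j $ i)"
  by (simp add: conj_transpose_def)

lemma conj_transpose_conj_transpose [simp]: "(A\<^sup>H)\<^sup>H = A"
  by (simp add: vec_eq_iff)

lemma conj_transpose_mult: "(A ** B)\<^sup>H = B\<^sup>H ** A\<^sup>H"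
  by (simp add: vec_eq_iff matrix_matrix_mult_def mult.commute)

lemma conj_transpose_add: "(A + B)\<^sup>H = A\<^sup>H + B\<^sup>H"
  by (simp add: vec_eq_iff)

lemma conj_transpose_diff: "(A - B)\<^sup>H = A\<^sup>H - B\<^sup>H"
  by (simp add: vec_eq_iff)

lemma conj_transpose_uminus: "(- A)\<^sup>H = - A\<^sup>H"
  by (simp add: vec_eq_iff)

lemma conj_transpose_mat [simp]: "(mat 1)\<^sup>H = mat 1"
  by (simp add: vec_eq_iff mat_def)

lemma matrix_diff_ldistrib: "A ** (B - C) = A ** B - A ** C"
  for A :: "'a::ring_1^'n^'m"
  by (simp add: vec_eq_iff matrix_matrix_mult_def sum_subtractf right_diff_distrib)

lemma matrix_diff_rdistrib: "(A - B) ** C = A ** C - B ** C"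
  for A :: "'a::ring_1^'n^'m"
  by (simp add: vec_eq_iff matrix_matrix_mult_def sum_subtractf left_diff_distrib)

lemma matrix_add_rdistrib: "(A + B) ** C = A ** C + B ** C"
  for A :: "'a::semiring_1^'n^'m"
  by (simp add: vec_eq_iff matrix_matrix_mult_def sum.distrib distrib_right)

lemma matrix_mul_sum_left: "A ** (\<Sum>k\<in>K. f k) = (\<Sum>k\<in>K. A ** f k)"
  for A :: "'a::semiring_1^'n^'m"
  by (induction K rule: infinite_finite_induct) (simp_all add: matrix_add_ldistrib)

lemma matrix_mul_uminus_left: "(- A) ** B = - (A ** B)"
  for A :: "'a::ring_1^'n^'m"
  by (simp add: vec_eq_iff matrix_matrix_mult_def sum_negf)

lemma matrix_mul_uminus_right: "A ** (- B) = - (A ** B)"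
  for A :: "'a::ring_1^'n^'m"
  by (simp add: vec_eq_iff matrix_matrix_mult_def sum_negf)

lemma conj_transpose_mult_self_eq_0_iff: "A\<^sup>H ** A = 0 \<longleftrightarrow> A = 0"
proof
  assume "A\<^sup>H ** A = 0"
  have "A $ i $ j = 0" for i j
  proof -
    have "complex_of_real (\<Sum>k\<in>UNIV. (cmod (A $ k $ j))\<^sup>2) = (A\<^sup>H ** A) $ j $ j"
      by (simp only: of_real_sum complex_norm_square) (simp add: matrix_matrix_mult_def mult.commute)
    then have "(\<Sum>k\<in>UNIV. (cmod (A $ k $ j))\<^sup>2) = 0"
      using \<open>A\<^sup>H ** A = 0\<close> by (simp del: of_real_sum)
    then show ?thesis
      by (simp add: sum_nonneg_eq_0_iff)
  qed
  then show "A = 0"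
    by (simp add: vec_eq_iff)
qed simp

section \<open>Existence of the Moore--Penrose inverse\<close>

lemma sequence_linearly_dependent:
  fixes f :: "nat \<Rightarrow> 'a::euclidean_space"
  shows "\<exists>N c. (\<exists>k\<le>N. c k \<noteq> 0) \<and> (\<Sum>k\<le>N. c k *\<^sub>R f k) = 0"
proof (cases "inj_on f {..DIM('a)}")
  case True
  then have "card (f ` {..DIM('a)}) > DIM('a)"
    by (simp add: card_image)
  then have "dependent (f ` {..DIM('a)})"
    by (rule dependent_biggerset)
  then obtain u where u: "\<exists>v\<in>f ` {..DIM('a)}. u v \<noteq> 0" "(\<Sum>v\<in>f ` {..DIM('a)}. u v *\<^sub>R v) = 0"
    using real_vector.dependent_finite[of "f ` {..DIM('a)}"] by auto
  then have "(\<Sum>k\<le>DIM('a). u (f k) *\<^sub>R f k) = 0"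
    by (simp add: sum.reindex[OF True])
  moreover obtain k where "k \<le> DIM('a)" "u (f k) \<noteq> 0"
    using u(1) by auto
  ultimately show ?thesis
    by (intro exI[of _ "DIM('a)"] exI[of _ "\<lambda>k. u (f k)"]) auto
next
  case False
  then obtain i j where ij: "i \<le> DIM('a)" "j \<le> DIM('a)" "i \<noteq> j" "f i = f j"
    unfolding inj_on_def by auto
  define c :: "nat \<Rightarrow> real" where "c k = (if k = i then 1 else 0) - (if k = j then 1 else 0)" for k
  have "(\<Sum>k\<le>DIM('a). c k *\<^sub>R f k)
      = (\<Sum>k\<le>DIM('a). if k = i then f k else 0) - (\<Sum>k\<le>DIM('a). if k = j then f k else 0)"
    unfolding c_def scaleR_left_diff_distrib sum_subtractf[symmetric] by (rule sum.cong) auto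
  also have "\<dots> = 0"
    using ij by (simp add: sum.delta)
  finally show ?thesis
    using ij by (intro exI[of _ "DIM('a)"] exI[of _ c]) (auto simp: c_def)
qed

primrec matrix_pow :: "'a::semiring_1^'n^'n \<Rightarrow> nat \<Rightarrow> 'a^'n^'n" where
  "matrix_pow H 0 = mat 1"
| "matrix_pow H (Suc k) = H ** matrix_pow H k"

lemma matrix_pow_commute: "H ** matrix_pow H k = matrix_pow H k ** H"
  by (induction k) (simp_all add: matrix_mul_assoc)

lemma matrix_poly_commute:
  "H ** (\<Sum>k\<le>N. c k *\<^sub>R matrix_pow H k) = (\<Sum>k\<le>N. c k *\<^sub>R matrix_pow H k) ** H"
  for H :: "'a::real_algebra_1^'n^'n"
  by (induction N) (simp_all add: matrix_add_ldistrib matrix_add_rdistrib matrix_pow_commute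
      matrix_mul_assoc matrix_scalar_ac flip: scalar_matrix_assoc)

lemma matrix_poly_shift:
  "(\<Sum>k\<le>Suc N. c k *\<^sub>R matrix_pow H k) = c 0 *\<^sub>R mat 1 + H ** (\<Sum>k\<le>N. c (Suc k) *\<^sub>R matrix_pow H k)"
  for H :: "'a::real_algebra_1^'n^'n"
  by (simp add: sum.atMost_Suc_shift matrix_mul_sum_left matrix_scalar_ac
      flip: scalar_matrix_assoc del: sum.atMost_Suc)

lemma hermitian_square_cancel:
  assumes "H\<^sup>H = H" and "H ** (H ** S) = 0"
  shows "H ** S = 0"
proof -
  have "(H ** S)\<^sup>H ** (H ** S) = 0"
    using assms by (simp add: conj_transpose_mult flip: matrix_mul_assoc)
  then show ?thesis
    by (simp add: conj_transpose_mult_self_eq_0_iff)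
qed

(* If c 0 \<noteq> 0, H is a multiple of H S H; otherwise H (H S) = 0, which for Hermitian H forces
   H S = 0, and the degree drops. *)
lemma hermitian_inner_inverse_of_annihilating_poly:
  fixes H :: "complex^'n^'n"
  assumes "H\<^sup>H = H"
  shows "H ** (\<Sum>k\<le>N. c k *\<^sub>R matrix_pow H k) = 0 \<Longrightarrow> \<exists>k\<le>N. c k \<noteq> 0 \<Longrightarrow> \<exists>K. H ** K ** H = H"
proof (induction N arbitrary: c)
  case 0
  then have "H = 0"
    by (auto simp: matrix_scalar_ac)
  then show ?case
    by simp
next
  case (Suc N)
  define S where "S = (\<Sum>k\<le>N. c (Suc k) *\<^sub>R matrix_pow H k)"
  have "H ** (c 0 *\<^sub>R mat 1 + H ** S) = 0"
    using Suc.prems(1) by (simp only: matrix_poly_shift S_def)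
  then have annihilated: "c 0 *\<^sub>R H + H ** (H ** S) = 0"
    by (simp add: matrix_add_ldistrib matrix_scalar_ac)
  have scale: "r *\<^sub>R (H ** (S ** H)) = H ** (r *\<^sub>R S) ** H" for r
    by (simp add: matrix_mul_assoc matrix_scalar_ac flip: scalar_matrix_assoc)
  show ?case
  proof (cases "c 0 = 0")
    case False
    have "H = (1 / c 0) *\<^sub>R (c 0 *\<^sub>R H)"
      using False by simp
    also have "c 0 *\<^sub>R H = - (H ** (H ** S))"
      using annihilated by (simp add: eq_neg_iff_add_eq_0)
    also have "(1 / c 0) *\<^sub>R - (H ** (H ** S)) = (- 1 / c 0) *\<^sub>R (H ** (S ** H))"
      by (simp add: S_def matrix_poly_commute)
    also have "\<dots> = H ** ((- 1 / c 0) *\<^sub>R S) ** H"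
      by (rule scale)
    finally show ?thesis
      by metis
  next
    case True
    then have "H ** S = 0"
      using annihilated hermitian_square_cancel[OF assms] by simp
    moreover obtain k where "k \<le> N" "c (Suc k) \<noteq> 0"
      using Suc.prems(2) True by (metis Suc_le_mono le_0_eq not0_implies_Suc)
    ultimately show ?thesis
      using Suc.IH[of "\<lambda>k. c (Suc k)"] by (auto simp: S_def)
  qed
qed

lemma hermitian_inner_inverse_exists:
  fixes H :: "complex^'n^'n"
  assumes "H\<^sup>H = H"
  shows "\<exists>K. H ** K ** H = H"
proof -
  obtain N c where "\<exists>k\<le>N. c k \<noteq> 0" "(\<Sum>k\<le>N. c k *\<^sub>R matrix_pow H k) = 0"
    using sequence_linearly_dependent by blast
  then show ?thesis
    by (intro hermitian_inner_inverse_of_annihilating_poly[OF assms, where N = N and c = c]) simp_all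
qed

definition is_mp_inverse :: "complex^'n^'m \<Rightarrow> complex^'m^'n \<Rightarrow> bool" where
  "is_mp_inverse A X \<longleftrightarrow> A ** X ** A = A \<and> X ** A ** X = X \<and>
                         (A ** X)\<^sup>H = A ** X \<and> (X ** A)\<^sup>H = X ** A"

lemma gram_inner_inverse_cancel:
  assumes "A\<^sup>H ** A ** G ** (A\<^sup>H ** A) = A\<^sup>H ** A"
  shows "A ** G ** (A\<^sup>H ** A) = A"
proof -
  define D where "D = A ** G ** (A\<^sup>H ** A) - A"
  have "A\<^sup>H ** D = 0"
    using assms by (simp add: D_def matrix_diff_ldistrib matrix_mul_assoc)
  then have "D\<^sup>H ** D = 0"
    by (simp add: D_def conj_transpose_diff conj_transpose_mult matrix_diff_rdistrib
        matrix_mul_assoc[symmetric])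
  then show ?thesis
    by (simp add: D_def conj_transpose_mult_self_eq_0_iff)
qed

lemma exists_1_3_inverse: "\<exists>Y. A ** Y ** A = A \<and> (A ** Y)\<^sup>H = A ** Y"
proof -
  obtain G where G: "A\<^sup>H ** A ** G ** (A\<^sup>H ** A) = A\<^sup>H ** A"
    using hermitian_inner_inverse_exists[of "A\<^sup>H ** A"] by (auto simp: conj_transpose_mult)
  have "A\<^sup>H ** A ** G\<^sup>H ** (A\<^sup>H ** A) = A\<^sup>H ** A"
    using arg_cong[OF G, of conj_transpose] by (simp add: conj_transpose_mult matrix_mul_assoc)
  then have GH_cancel: "A ** G\<^sup>H ** (A\<^sup>H ** A) = A"
    by (rule gram_inner_inverse_cancel)
  have GH_cancel_transposed: "A\<^sup>H ** A ** G ** A\<^sup>H = A\<^sup>H"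
    using arg_cong[OF GH_cancel, of conj_transpose] by (simp add: conj_transpose_mult matrix_mul_assoc)
  have "A ** (G ** A\<^sup>H) ** A = A"
    using gram_inner_inverse_cancel[OF G] by (simp add: matrix_mul_assoc)
  moreover have "(A ** (G ** A\<^sup>H))\<^sup>H = A ** (G ** A\<^sup>H)"
  proof -
    have "(A ** (G ** A\<^sup>H))\<^sup>H = A ** G\<^sup>H ** (A\<^sup>H ** A ** G ** A\<^sup>H)"
      using GH_cancel_transposed by (simp add: conj_transpose_mult matrix_mul_assoc)
    also have "\<dots> = (A ** G\<^sup>H ** (A\<^sup>H ** A)) ** G ** A\<^sup>H"
      by (simp add: matrix_mul_assoc)
    finally show ?thesis
      using GH_cancel by (simp add: matrix_mul_assoc)
  qed
  ultimately show ?thesis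
    by blast
qed

lemma exists_1_4_inverse: "\<exists>Z. A ** Z ** A = A \<and> (Z ** A)\<^sup>H = Z ** A"
proof -
  obtain W where W: "A\<^sup>H ** W ** A\<^sup>H = A\<^sup>H" "(A\<^sup>H ** W)\<^sup>H = A\<^sup>H ** W"
    using exists_1_3_inverse by blast
  have "A ** W\<^sup>H ** A = A"
    using arg_cong[OF W(1), of conj_transpose] by (simp add: conj_transpose_mult matrix_mul_assoc)
  moreover have "(W\<^sup>H ** A)\<^sup>H = W\<^sup>H ** A"
    using W(2) by (simp add: conj_transpose_mult)
  ultimately show ?thesis
    by blast
qed

lemma is_mp_inverse_exists: "\<exists>X. is_mp_inverse A X"
proof -
  \<comment> \<open>Urquhart's construction: \<open>Z A Y\<close> for a \<open>{1,4}\<close>-inverse \<open>Z\<close> and a \<open>{1,3}\<close>-inverse \<open>Y\<close>.\<close>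
  obtain Y where Y: "A ** Y ** A = A" "(A ** Y)\<^sup>H = A ** Y"
    using exists_1_3_inverse by blast
  obtain Z where Z: "A ** Z ** A = A" "(Z ** A)\<^sup>H = Z ** A"
    using exists_1_4_inverse by blast
  have "A ** (Z ** A ** Y) = A ** Y"
    using Z(1) by (simp add: matrix_mul_assoc)
  moreover have "Z ** A ** Y ** A = Z ** A"
    using Y(1) by (simp flip: matrix_mul_assoc)
  ultimately
  have "is_mp_inverse A (Z ** A ** Y)"
    using Y Z by (simp add: is_mp_inverse_def) (metis matrix_mul_assoc)
  then show ?thesis ..
qed

lemma is_mp_inverse_unique:
  assumes "is_mp_inverse A X" and "is_mp_inverse A Y"
  shows "X = Y"
proof -
  have X: "A ** X ** A = A" "X ** A ** X = X" "(A ** X)\<^sup>H = A ** X" "(X ** A)\<^sup>H = X ** A"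
    and Y: "A ** Y ** A = A" "Y ** A ** Y = Y" "(A ** Y)\<^sup>H = A ** Y" "(Y ** A)\<^sup>H = Y ** A"
    using assms by (simp_all add: is_mp_inverse_def)
  have "A ** X = (A ** Y ** (A ** X))\<^sup>H"
    using X(3) Y(1) by (simp add: matrix_mul_assoc)
  also have "\<dots> = (A ** X)\<^sup>H ** (A ** Y)\<^sup>H"
    by (simp add: conj_transpose_mult)
  also have "\<dots> = A ** Y"
    using X(1,3) Y(3) by (simp add: matrix_mul_assoc)
  finally have AX: "A ** X = A ** Y" .
  have "X ** A = (X ** A ** (Y ** A))\<^sup>H"
    using X(4) Y(1) by (simp flip: matrix_mul_assoc)
  also have "\<dots> = (Y ** A)\<^sup>H ** (X ** A)\<^sup>H"
    by (simp add: conj_transpose_mult)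
  also have "\<dots> = Y ** A"
    using X(1,4) Y(4) by (simp flip: matrix_mul_assoc)
  finally have XA: "X ** A = Y ** A" .
  have "X = X ** A ** X"
    using X(2) by simp
  also have "\<dots> = Y ** A ** Y"
    using AX XA by (metis matrix_mul_assoc)
  finally show ?thesis
    using Y(2) by simp
qed

notation mp_inverse ("_\<^sup>\<dagger>" [1000] 999)

lemma is_mp_inverse_mp_inverse: "is_mp_inverse A (A\<^sup>\<dagger>)"
proof -
  have "\<exists>!X. is_mp_inverse A X"
    using is_mp_inverse_exists is_mp_inverse_unique by blast
  then show ?thesis
    unfolding mp_inverse_def is_mp_inverse_def[symmetric] by (rule theI')
qed

lemma mp_inverse_eqI: "is_mp_inverse A X \<Longrightarrow> A\<^sup>\<dagger> = X"
  using is_mp_inverse_mp_inverse is_mp_inverse_unique by blast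

lemma mp_inverse_penrose:
  shows "A ** A\<^sup>\<dagger> ** A = A" and "A\<^sup>\<dagger> ** A ** A\<^sup>\<dagger> = A\<^sup>\<dagger>"
    and "(A ** A\<^sup>\<dagger>)\<^sup>H = A ** A\<^sup>\<dagger>" and "(A\<^sup>\<dagger> ** A)\<^sup>H = A\<^sup>\<dagger> ** A"
  using is_mp_inverse_mp_inverse[of A] by (simp_all add: is_mp_inverse_def)

lemma mp_inverse_conj_transpose: "(A\<^sup>H)\<^sup>\<dagger> = (A\<^sup>\<dagger>)\<^sup>H"
proof (rule mp_inverse_eqI)
  have "A\<^sup>H ** (A\<^sup>\<dagger>)\<^sup>H ** A\<^sup>H = A\<^sup>H"
    using arg_cong[OF mp_inverse_penrose(1), of conj_transpose]
    by (simp add: conj_transpose_mult matrix_mul_assoc)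
  moreover have "(A\<^sup>\<dagger>)\<^sup>H ** A\<^sup>H ** (A\<^sup>\<dagger>)\<^sup>H = (A\<^sup>\<dagger>)\<^sup>H"
    using arg_cong[OF mp_inverse_penrose(2), of conj_transpose]
    by (simp add: conj_transpose_mult matrix_mul_assoc)
  moreover have "A\<^sup>H ** (A\<^sup>\<dagger>)\<^sup>H = A\<^sup>\<dagger> ** A" and "(A\<^sup>\<dagger>)\<^sup>H ** A\<^sup>H = A ** A\<^sup>\<dagger>"
    by (metis conj_transpose_mult mp_inverse_penrose(3,4))+
  ultimately show "is_mp_inverse (A\<^sup>H) ((A\<^sup>\<dagger>)\<^sup>H)"
    by (simp add: is_mp_inverse_def mp_inverse_penrose)
qed

definition orthogonal_projector :: "complex^'n^'n \<Rightarrow> bool" where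
  "orthogonal_projector P \<longleftrightarrow> P\<^sup>H = P \<and> P ** P = P"

lemma orthogonal_projector_mult_mp_inverse: "orthogonal_projector (A ** A\<^sup>\<dagger>)"
  unfolding orthogonal_projector_def
  by (metis matrix_mul_assoc mp_inverse_penrose(1,3))

lemma orthogonal_projector_mp_inverse_mult: "orthogonal_projector (A\<^sup>\<dagger> ** A)"
  unfolding orthogonal_projector_def
  by (metis matrix_mul_assoc mp_inverse_penrose(2,4))

section \<open>Frobenius and spectral norms\<close>

lemma norm_vec_power2: "(norm x)\<^sup>2 = (\<Sum>i\<in>UNIV. (norm (x $ i))\<^sup>2)"
  by (simp add: norm_vec_def L2_set_def sum_nonneg)

lemma frob_norm_eq_norm: "frob_norm M = norm M"
  unfolding frob_norm_def norm_vec_def L2_set_def by (simp add: sum_nonneg)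

lemma norm_matrix_power2_columns: "(norm M)\<^sup>2 = (\<Sum>j\<in>UNIV. (norm (column j M))\<^sup>2)"
proof -
  have "(norm M)\<^sup>2 = (\<Sum>i\<in>UNIV. \<Sum>j\<in>UNIV. (norm (M $ i $ j))\<^sup>2)"
    by (simp add: norm_vec_power2)
  also have "\<dots> = (\<Sum>j\<in>UNIV. \<Sum>i\<in>UNIV. (norm (M $ i $ j))\<^sup>2)"
    by (rule sum.swap)
  finally show ?thesis
    by (simp add: norm_vec_power2 column_def)
qed

lemma sum_swap3:
  "(\<Sum>i\<in>I. \<Sum>j\<in>J. \<Sum>k\<in>K. f i j k) = (\<Sum>k\<in>K. \<Sum>j\<in>J. \<Sum>i\<in>I. f i j k)"
proof -
  have "(\<Sum>i\<in>I. \<Sum>j\<in>J. \<Sum>k\<in>K. f i j k) = (\<Sum>i\<in>I. \<Sum>k\<in>K. \<Sum>j\<in>J. f i j k)"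
    by (rule sum.cong[OF refl], rule sum.swap)
  also have "\<dots> = (\<Sum>k\<in>K. \<Sum>i\<in>I. \<Sum>j\<in>J. f i j k)"
    by (rule sum.swap)
  also have "\<dots> = (\<Sum>k\<in>K. \<Sum>j\<in>J. \<Sum>i\<in>I. f i j k)"
    by (rule sum.cong[OF refl], rule sum.swap)
  finally show ?thesis .
qed

lemma inner_complex_matrix: "inner X Y = Re (\<Sum>i\<in>UNIV. \<Sum>j\<in>UNIV. cnj (X $ i $ j) * Y $ i $ j)"
  for X Y :: "complex^'n^'m"
  by (simp add: inner_vec_def inner_complex_def Re_sum)

lemma inner_complex_vector: "inner x y = Re (\<Sum>i\<in>UNIV. cnj (x $ i) * y $ i)"
  for x y :: "complex^'n"
  by (simp add: inner_vec_def inner_complex_def Re_sum)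

lemma inner_matrix_mult_left: "inner X (M ** Y) = inner (M\<^sup>H ** X) Y"
proof -
  have "(\<Sum>i\<in>UNIV. \<Sum>j\<in>UNIV. cnj (X $ i $ j) * (M ** Y) $ i $ j)
      = (\<Sum>i\<in>UNIV. \<Sum>j\<in>UNIV. \<Sum>k\<in>UNIV. cnj (X $ i $ j) * M $ i $ k * Y $ k $ j)"
    by (simp add: matrix_matrix_mult_def sum_distrib_left mult.assoc)
  also have "\<dots> = (\<Sum>k\<in>UNIV. \<Sum>j\<in>UNIV. \<Sum>i\<in>UNIV. cnj (X $ i $ j) * M $ i $ k * Y $ k $ j)"
    by (rule sum_swap3)
  also have "\<dots> = (\<Sum>k\<in>UNIV. \<Sum>j\<in>UNIV. cnj ((M\<^sup>H ** X) $ k $ j) * Y $ k $ j)"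
    by (simp add: matrix_matrix_mult_def sum_distrib_left mult_ac)
  finally show ?thesis
    by (simp add: inner_complex_matrix)
qed

lemma inner_conj_transpose: "inner (X\<^sup>H) (Y\<^sup>H) = inner X Y"
proof -
  have "inner (X\<^sup>H) (Y\<^sup>H) = (\<Sum>i\<in>UNIV. \<Sum>j\<in>UNIV. inner (X $ j $ i) (Y $ j $ i))"
    by (simp add: inner_vec_def inner_complex_def)
  also have "\<dots> = (\<Sum>j\<in>UNIV. \<Sum>i\<in>UNIV. inner (X $ j $ i) (Y $ j $ i))"
    by (rule sum.swap)
  finally show ?thesis
    by (simp add: inner_vec_def)
qed

lemma inner_matrix_mult_right: "inner X (Y ** M) = inner (X ** M\<^sup>H) Y"
proof -
  have "inner X (Y ** M) = inner (X\<^sup>H) (M\<^sup>H ** Y\<^sup>H)"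
    using inner_conj_transpose[of X "Y ** M"] by (simp add: conj_transpose_mult)
  also have "\<dots> = inner ((X ** M\<^sup>H)\<^sup>H) (Y\<^sup>H)"
    by (simp add: inner_matrix_mult_left conj_transpose_mult)
  finally show ?thesis
    by (simp add: inner_conj_transpose)
qed

lemma norm_conj_transpose: "norm (M\<^sup>H) = norm M"
  by (simp add: norm_eq_sqrt_inner inner_conj_transpose)

lemma orthogonal_projector_orthogonal_left:
  assumes "orthogonal_projector P"
  shows "orthogonal (P ** X) ((mat 1 - P) ** Y)"
proof -
  have "(mat 1 - P)\<^sup>H ** (P ** X) = 0"
    using assms by (simp add: orthogonal_projector_def conj_transpose_diff matrix_diff_rdistrib
        matrix_mul_assoc)
  then show ?thesis
    by (simp add: orthogonal_def inner_matrix_mult_left)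
qed

lemma orthogonal_projector_orthogonal_right:
  assumes "orthogonal_projector P"
  shows "orthogonal (X ** P) (Y ** (mat 1 - P))"
proof -
  have "X ** P ** (mat 1 - P)\<^sup>H = 0"
    using assms by (simp add: orthogonal_projector_def conj_transpose_diff matrix_diff_ldistrib
        flip: matrix_mul_assoc)
  then show ?thesis
    by (simp add: orthogonal_def inner_matrix_mult_right)
qed

lemma norm_power2_orthogonal_projector_split:
  assumes "orthogonal_projector P"
  shows "(norm X)\<^sup>2 = (norm (P ** X))\<^sup>2 + (norm ((mat 1 - P) ** X))\<^sup>2"
proof -
  have "X = P ** X + (mat 1 - P) ** X"
    by (simp add: matrix_diff_rdistrib)
  then show ?thesis
    using norm_add_Pythagorean[OF orthogonal_projector_orthogonal_left[OF assms]] by metis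
qed

lemma norm_matrix_vector_le_spec_norm: "norm (M *v x) \<le> spec_norm M * norm x"
  unfolding spec_norm_def by (rule onorm) simp

lemma spec_norm_nonneg: "0 \<le> spec_norm M"
  unfolding spec_norm_def by (rule onorm_pos_le) simp

lemma inner_conj_transpose_matrix_vector: "inner (M\<^sup>H *v x) y = inner x (M *v y)"
proof -
  have "(\<Sum>j\<in>UNIV. cnj ((M\<^sup>H *v x) $ j) * y $ j) = (\<Sum>j\<in>UNIV. \<Sum>i\<in>UNIV. cnj (x $ i) * M $ i $ j * y $ j)"
    by (simp add: matrix_vector_mult_def sum_distrib_left sum_distrib_right mult_ac)
  also have "\<dots> = (\<Sum>i\<in>UNIV. \<Sum>j\<in>UNIV. cnj (x $ i) * M $ i $ j * y $ j)"
    by (rule sum.swap)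
  also have "\<dots> = (\<Sum>i\<in>UNIV. cnj (x $ i) * (M *v y) $ i)"
    by (simp add: matrix_vector_mult_def sum_distrib_left mult_ac)
  finally show ?thesis
    by (simp add: inner_complex_vector)
qed

lemma spec_norm_conj_transpose_le: "spec_norm (M\<^sup>H) \<le> spec_norm M"
  unfolding spec_norm_def[of "M\<^sup>H"]
proof (rule onorm_bound[OF spec_norm_nonneg[of M]])
  fix x
  let ?y = "M\<^sup>H *v x"
  have "(norm ?y)\<^sup>2 = inner x (M *v ?y)"
    by (simp add: power2_norm_eq_inner inner_conj_transpose_matrix_vector)
  also have "\<dots> \<le> norm x * norm (M *v ?y)"
    by (rule norm_cauchy_schwarz)
  also have "\<dots> \<le> norm x * (spec_norm M * norm ?y)"
    by (simp add: mult_left_mono norm_matrix_vector_le_spec_norm)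
  finally have "norm ?y * norm ?y \<le> (spec_norm M * norm x) * norm ?y"
    by (simp add: power2_eq_square mult_ac)
  then show "norm ?y \<le> spec_norm M * norm x"
    using spec_norm_nonneg[of M] by (cases "norm ?y = 0") (simp_all add: mult_le_cancel_right)
qed

lemma spec_norm_conj_transpose: "spec_norm (M\<^sup>H) = spec_norm M"
  using spec_norm_conj_transpose_le[of M] spec_norm_conj_transpose_le[of "M\<^sup>H"] by simp

lemma norm_matrix_mult_le_left: "norm (M ** N) \<le> spec_norm M * norm N"
proof -
  have "(norm (M ** N))\<^sup>2 = (\<Sum>j\<in>UNIV. (norm (M *v column j N))\<^sup>2)"
    by (simp add: norm_matrix_power2_columns matrix_vector_mult_def matrix_matrix_mult_def column_def)
  also have "\<dots> \<le> (\<Sum>j\<in>UNIV. (spec_norm M * norm (column j N))\<^sup>2)"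
    by (intro sum_mono power_mono norm_matrix_vector_le_spec_norm) simp
  also have "\<dots> = (spec_norm M * norm N)\<^sup>2"
    by (simp add: norm_matrix_power2_columns power_mult_distrib sum_distrib_left)
  finally show ?thesis
    using spec_norm_nonneg[of M] by (simp add: power2_le_iff_abs_le)
qed

section \<open>The perturbation bound\<close>

lemma norm_diff_Pythagorean:
  assumes "orthogonal a b"
  shows "(norm (a - b))\<^sup>2 = (norm a)\<^sup>2 + (norm b)\<^sup>2"
  using norm_add_Pythagorean[of a "- b"] assms by (simp add: orthogonal_clauses)

(* Includes c = 0, where the left-hand side is a\<^sup>2 / 0 = 0. *)
lemma power2_divide_le_of_le_mult:
  fixes a b c :: real
  assumes "0 \<le> a" and "a \<le> c * b"
  shows "a\<^sup>2 / c\<^sup>2 \<le> b\<^sup>2"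
proof (cases "c = 0")
  case False
  have "a\<^sup>2 \<le> (c * b)\<^sup>2"
    using assms by (intro power_mono) auto
  with False show ?thesis
    by (simp add: divide_le_eq power_mult_distrib mult.commute)
qed simp

lemma norm_power2_mp_inverse_diff:
  fixes A B :: "complex^'n^'m"
  shows "(norm (B\<^sup>\<dagger> - A\<^sup>\<dagger>))\<^sup>2 = (norm (B\<^sup>\<dagger> ** (B - A) ** A\<^sup>\<dagger>))\<^sup>2
           + (norm (B\<^sup>\<dagger> ** (mat 1 - A ** A\<^sup>\<dagger>)))\<^sup>2 + (norm ((mat 1 - B\<^sup>\<dagger> ** B) ** A\<^sup>\<dagger>))\<^sup>2"
proof -
  define P Q where "P = A ** A\<^sup>\<dagger>" and "Q = B\<^sup>\<dagger> ** B"
  define X Y where "X = B\<^sup>\<dagger> ** (mat 1 - P)" and "Y = B\<^sup>\<dagger> ** (B - A) ** A\<^sup>\<dagger>"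
  have "A\<^sup>\<dagger> ** P = A\<^sup>\<dagger>"
    by (simp add: P_def matrix_mul_assoc mp_inverse_penrose)
  then have "orthogonal X (Y ** P)"
    unfolding X_def P_def
    by (metis orthogonal_commute orthogonal_projector_orthogonal_right orthogonal_projector_mult_mp_inverse)
  moreover have "Y ** P = Y"
    using \<open>A\<^sup>\<dagger> ** P = A\<^sup>\<dagger>\<close> by (simp add: Y_def flip: matrix_mul_assoc)
  ultimately have XY: "(norm (X - Y))\<^sup>2 = (norm X)\<^sup>2 + (norm Y)\<^sup>2"
    by (simp add: norm_diff_Pythagorean)
  have "B\<^sup>\<dagger> - A\<^sup>\<dagger> = Q ** (X - Y) - (mat 1 - Q) ** A\<^sup>\<dagger>"
    by (simp add: X_def Y_def P_def Q_def matrix_diff_ldistrib matrix_diff_rdistrib matrix_mul_assoc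
        mp_inverse_penrose)
  moreover have "Q ** (X - Y) = X - Y"
    by (simp add: X_def Y_def Q_def matrix_diff_ldistrib matrix_mul_assoc mp_inverse_penrose)
  moreover have "orthogonal (Q ** (X - Y)) ((mat 1 - Q) ** A\<^sup>\<dagger>)"
    unfolding Q_def by (intro orthogonal_projector_orthogonal_left orthogonal_projector_mp_inverse_mult)
  ultimately have "(norm (B\<^sup>\<dagger> - A\<^sup>\<dagger>))\<^sup>2 = (norm (X - Y))\<^sup>2 + (norm ((mat 1 - Q) ** A\<^sup>\<dagger>))\<^sup>2"
    by (metis norm_diff_Pythagorean)
  with XY show ?thesis
    by (simp add: X_def Y_def P_def Q_def)
qed

lemma conj_transpose_mult_range_complement: "A\<^sup>H ** (mat 1 - A ** A\<^sup>\<dagger>) = 0"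
proof -
  have "A\<^sup>H ** (A ** A\<^sup>\<dagger>) = A\<^sup>H ** (A ** A\<^sup>\<dagger>)\<^sup>H"
    by (simp only: mp_inverse_penrose(3))
  also have "\<dots> = (A ** A\<^sup>\<dagger> ** A)\<^sup>H"
    by (simp add: conj_transpose_mult matrix_mul_assoc)
  finally show ?thesis
    by (simp add: matrix_diff_ldistrib mp_inverse_penrose(1))
qed

lemma mp_inverse_mult_range_complement_eq:
  "B\<^sup>\<dagger> ** (mat 1 - A ** A\<^sup>\<dagger>) = B\<^sup>\<dagger> ** ((mat 1 - A ** A\<^sup>\<dagger>) ** (B - A) ** B\<^sup>\<dagger>)\<^sup>H"
proof -
  define P where "P = A ** A\<^sup>\<dagger>"
  have "B\<^sup>\<dagger> ** (mat 1 - P) = B\<^sup>\<dagger> ** (B ** B\<^sup>\<dagger>)\<^sup>H ** (mat 1 - P)"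
    by (simp add: mp_inverse_penrose matrix_mul_assoc)
  also have "\<dots> = B\<^sup>\<dagger> ** (B\<^sup>\<dagger>)\<^sup>H ** ((A + (B - A))\<^sup>H ** (mat 1 - P))"
    by (simp add: conj_transpose_mult matrix_mul_assoc)
  also have "(A + (B - A))\<^sup>H ** (mat 1 - P) = (B - A)\<^sup>H ** (mat 1 - P)"
    using conj_transpose_mult_range_complement[of A]
    by (simp only: P_def conj_transpose_add matrix_add_rdistrib) simp
  also have "B\<^sup>\<dagger> ** (B\<^sup>\<dagger>)\<^sup>H ** ((B - A)\<^sup>H ** (mat 1 - P)) = B\<^sup>\<dagger> ** ((mat 1 - P) ** (B - A) ** B\<^sup>\<dagger>)\<^sup>H"
    using orthogonal_projector_mult_mp_inverse[of A]
    by (simp add: P_def orthogonal_projector_def conj_transpose_mult conj_transpose_diff matrix_mul_assoc)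
  finally show ?thesis
    by (simp add: P_def)
qed

lemma norm_power2_mp_inverse_mult_complement_le:
  fixes A B :: "complex^'n^'m"
  shows "(norm (B\<^sup>\<dagger> ** (mat 1 - A ** A\<^sup>\<dagger>)))\<^sup>2
           \<le> (spec_norm (B\<^sup>\<dagger>))\<^sup>2 * ((norm ((B - A) ** B\<^sup>\<dagger>))\<^sup>2
                 - (norm (A\<^sup>\<dagger> ** (B - A) ** B\<^sup>\<dagger>))\<^sup>2 / (spec_norm (A\<^sup>\<dagger>))\<^sup>2)"
proof -
  define P E where "P = A ** A\<^sup>\<dagger>" and "E = B - A"
  have proj: "orthogonal_projector P"
    unfolding P_def by (rule orthogonal_projector_mult_mp_inverse)
  have "norm (B\<^sup>\<dagger> ** (mat 1 - P)) \<le> spec_norm (B\<^sup>\<dagger>) * norm ((mat 1 - P) ** E ** B\<^sup>\<dagger>)"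
    unfolding P_def E_def
    by (metis mp_inverse_mult_range_complement_eq norm_matrix_mult_le_left norm_conj_transpose)
  then have complement: "(norm (B\<^sup>\<dagger> ** (mat 1 - P)))\<^sup>2
      \<le> (spec_norm (B\<^sup>\<dagger>))\<^sup>2 * (norm ((mat 1 - P) ** E ** B\<^sup>\<dagger>))\<^sup>2"
    by (simp add: power_mono flip: power_mult_distrib)
  have "A\<^sup>\<dagger> ** E ** B\<^sup>\<dagger> = A\<^sup>\<dagger> ** (P ** E ** B\<^sup>\<dagger>)"
    by (simp add: P_def matrix_mul_assoc mp_inverse_penrose)
  then have "norm (A\<^sup>\<dagger> ** E ** B\<^sup>\<dagger>) \<le> spec_norm (A\<^sup>\<dagger>) * norm (P ** E ** B\<^sup>\<dagger>)"
    by (metis norm_matrix_mult_le_left)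
  then have "(norm (A\<^sup>\<dagger> ** E ** B\<^sup>\<dagger>))\<^sup>2 / (spec_norm (A\<^sup>\<dagger>))\<^sup>2 \<le> (norm (P ** E ** B\<^sup>\<dagger>))\<^sup>2"
    by (simp add: power2_divide_le_of_le_mult)
  moreover have "(norm (E ** B\<^sup>\<dagger>))\<^sup>2 = (norm (P ** E ** B\<^sup>\<dagger>))\<^sup>2 + (norm ((mat 1 - P) ** E ** B\<^sup>\<dagger>))\<^sup>2"
    using norm_power2_orthogonal_projector_split[OF proj, of "E ** B\<^sup>\<dagger>"] by (simp only: matrix_mul_assoc)
  ultimately have "(norm ((mat 1 - P) ** E ** B\<^sup>\<dagger>))\<^sup>2
      \<le> (norm (E ** B\<^sup>\<dagger>))\<^sup>2 - (norm (A\<^sup>\<dagger> ** E ** B\<^sup>\<dagger>))\<^sup>2 / (spec_norm (A\<^sup>\<dagger>))\<^sup>2"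
    by linarith
  then show ?thesis
    using complement unfolding E_def P_def by (meson mult_left_mono order_trans zero_le_power2)
qed

lemma norm_power2_complement_mult_mp_inverse_le:
  fixes A B :: "complex^'n^'m"
  shows "(norm ((mat 1 - B\<^sup>\<dagger> ** B) ** A\<^sup>\<dagger>))\<^sup>2
           \<le> (spec_norm (A\<^sup>\<dagger>))\<^sup>2 * ((norm (A\<^sup>\<dagger> ** (B - A)))\<^sup>2
                 - (norm (A\<^sup>\<dagger> ** (B - A) ** B\<^sup>\<dagger>))\<^sup>2 / (spec_norm (B\<^sup>\<dagger>))\<^sup>2)"
proof -
  have "B\<^sup>H ** (B\<^sup>H)\<^sup>\<dagger> = B\<^sup>\<dagger> ** B"
    by (metis conj_transpose_mult mp_inverse_conj_transpose mp_inverse_penrose(4))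
  then have "((mat 1 - B\<^sup>\<dagger> ** B) ** A\<^sup>\<dagger>)\<^sup>H = (A\<^sup>H)\<^sup>\<dagger> ** (mat 1 - B\<^sup>H ** (B\<^sup>H)\<^sup>\<dagger>)"
    by (simp add: mp_inverse_conj_transpose conj_transpose_mult[of "mat 1 - B\<^sup>\<dagger> ** B"]
        conj_transpose_diff mp_inverse_penrose(4))
  then have "norm ((mat 1 - B\<^sup>\<dagger> ** B) ** A\<^sup>\<dagger>) = norm ((A\<^sup>H)\<^sup>\<dagger> ** (mat 1 - B\<^sup>H ** (B\<^sup>H)\<^sup>\<dagger>))"
    by (metis norm_conj_transpose)
  moreover have "A\<^sup>H - B\<^sup>H = - (B - A)\<^sup>H"
    by (simp add: conj_transpose_diff)
  then have "(A\<^sup>H - B\<^sup>H) ** (A\<^sup>H)\<^sup>\<dagger> = - (A\<^sup>\<dagger> ** (B - A))\<^sup>H"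
    and "(B\<^sup>H)\<^sup>\<dagger> ** (A\<^sup>H - B\<^sup>H) ** (A\<^sup>H)\<^sup>\<dagger> = - (A\<^sup>\<dagger> ** (B - A) ** B\<^sup>\<dagger>)\<^sup>H"
    by (simp_all add: mp_inverse_conj_transpose conj_transpose_mult conj_transpose_uminus
        matrix_mul_uminus_left matrix_mul_uminus_right matrix_mul_assoc)
  ultimately show ?thesis
    using norm_power2_mp_inverse_mult_complement_le[where A = "B\<^sup>H" and B = "A\<^sup>H"]
    by (simp add: norm_conj_transpose spec_norm_conj_transpose mp_inverse_conj_transpose)
qed

theorem norm_power2_mp_inverse_diff_le:
  fixes A B :: "complex^'n^'m"
  shows "(norm (B\<^sup>\<dagger> - A\<^sup>\<dagger>))\<^sup>2
           \<le> (spec_norm (A\<^sup>\<dagger>))\<^sup>2 * ((norm (A\<^sup>\<dagger> ** (B - A)))\<^sup>2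
                 - (norm (A\<^sup>\<dagger> ** (B - A) ** B\<^sup>\<dagger>))\<^sup>2 / (spec_norm (B\<^sup>\<dagger>))\<^sup>2)
             + (spec_norm (B\<^sup>\<dagger>))\<^sup>2 * ((norm ((B - A) ** B\<^sup>\<dagger>))\<^sup>2
                 - (norm (A\<^sup>\<dagger> ** (B - A) ** B\<^sup>\<dagger>))\<^sup>2 / (spec_norm (A\<^sup>\<dagger>))\<^sup>2)
             + (norm (B\<^sup>\<dagger> ** (B - A) ** A\<^sup>\<dagger>))\<^sup>2"
  using norm_power2_mp_inverse_diff[where A = A and B = B]
    norm_power2_mp_inverse_mult_complement_le[where A = A and B = B]
    norm_power2_complement_mult_mp_inverse_le[where A = A and B = B]
  by linarith

theorem corollary3p4:
  fixes A B E :: "complex^'n^'m" and r s :: nat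
  assumes "rank A = r" and "rank B = s" and "E = B - A"
  defines "\<gamma>1 \<equiv> (spec_norm (mp_inverse A))\<^sup>2 *
              ((frob_norm (mp_inverse A ** E))\<^sup>2
                 - (frob_norm (mp_inverse A ** E ** mp_inverse B))\<^sup>2 / (spec_norm (mp_inverse B))\<^sup>2)
            + (spec_norm (mp_inverse B))\<^sup>2 *
              ((frob_norm (E ** mp_inverse B))\<^sup>2
                 - (frob_norm (mp_inverse A ** E ** mp_inverse B))\<^sup>2 / (spec_norm (mp_inverse A))\<^sup>2)"
    and "\<gamma>2 \<equiv> (spec_norm (mp_inverse A))\<^sup>2 *
              ((frob_norm (E ** mp_inverse A))\<^sup>2
                 - (frob_norm (mp_inverse B ** E ** mp_inverse A))\<^sup>2 / (spec_norm (mp_inverse B))\<^sup>2)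
            + (spec_norm (mp_inverse B))\<^sup>2 *
              ((frob_norm (mp_inverse B ** E))\<^sup>2
                 - (frob_norm (mp_inverse B ** E ** mp_inverse A))\<^sup>2 / (spec_norm (mp_inverse A))\<^sup>2)"
  shows "(frob_norm (mp_inverse B - mp_inverse A))\<^sup>2
           \<le> min (\<gamma>1 + (frob_norm (mp_inverse B ** E ** mp_inverse A))\<^sup>2)
                 (\<gamma>2 + (frob_norm (mp_inverse A ** E ** mp_inverse B))\<^sup>2)"
proof -
  have "(norm (B\<^sup>\<dagger> - A\<^sup>\<dagger>))\<^sup>2 \<le> \<gamma>1 + (norm (B\<^sup>\<dagger> ** E ** A\<^sup>\<dagger>))\<^sup>2"
    using norm_power2_mp_inverse_diff_le[where A = A and B = B]
    by (simp add: \<gamma>1_def frob_norm_eq_norm assms(3))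
  moreover have "(norm (B\<^sup>\<dagger> - A\<^sup>\<dagger>))\<^sup>2 \<le> \<gamma>2 + (norm (A\<^sup>\<dagger> ** E ** B\<^sup>\<dagger>))\<^sup>2"
  proof -
    have "A - B = - E"
      using assms(3) by simp
    then show ?thesis
      using norm_power2_mp_inverse_diff_le[where A = B and B = A]
      by (simp add: \<gamma>2_def frob_norm_eq_norm norm_minus_commute[of "A\<^sup>\<dagger>"]
          matrix_mul_uminus_left matrix_mul_uminus_right)
  qed
  ultimately show ?thesis
    by (simp add: frob_norm_eq_norm)
qed

end
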